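(* Let $H:\mathbb{R}^{2n}\to\mathbb{R}$ be smooth and let $\hat H(y,t)$ be a smooth function on $V\times U$ ($V\subseteq\mathbb{R}^{2n}$ open, $U\ni 0$ an open interval) satisfying $$\frac{\partial}{\partial t}\big(t\,\hat H(y,t)\big)=H\Big(y+\frac{t}{2}J^{-1}\nabla_y\hat H(y,t)\Big)\quad\text{for all }(y,t)\in V\times U.$$ Then, writing $\hat H=\hat H(y,h)$ and $H=H(y)$, as $h\to 0$ (locally uniformly in $y\in V$), $$H=\hat H-\frac{h^2}{24}\,\nabla^2\hat H\big(J^{-1}\nabla H,\ J^{-1}\nabla H\big)+O(h^4),$$ where $\nabla^2\hat H(v,v)=v^{\top}\nabla_y^2\hat H\,v$ denotes the Hessian quadratic form.
   Context: $J=\begin{pmatrix}0 & I_n\\ -I_n & 0\end{pmatrix}$. The PDE is the Hamilton–Jacobi equation satisfied by the time-dependent modified Hamiltonian of the implicit midpoint rule $y_1=y_0+hJ^{-1}\nabla H\big(\tfrac{y_0+y_1}{2}\big)$, i.e. the function with $J^{-1}\nabla\hat H\big(\tfrac{y_0+y_1}{2},h\big)=(y_1-y_0)/h$ where $y_1$ is the exact time-$h$ flow of $\dot y=J^{-1}\nabla H(y)$. *)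

theory Defs
  imports "HOL-Analysis.Analysis"
begin

text \<open>J = [[0, I],[-I, 0]], so J(q,p) = (p,-q) and J^{-1}(a,b) = (-b,a).\<close>
definition Jmat :: "((real^'n) \<times> (real^'n)) \<Rightarrow> ((real^'n) \<times> (real^'n))" where
  "Jmat z = (snd z, - fst z)"

definition Jinv :: "((real^'n) \<times> (real^'n)) \<Rightarrow> ((real^'n) \<times> (real^'n))" where
  "Jinv z = (- snd z, fst z)"

fun iter_dderiv :: "('a::real_normed_vector \<Rightarrow> real) \<Rightarrow> 'a list \<Rightarrow> 'a \<Rightarrow> real" where
  "iter_dderiv f [] = f"
| "iter_dderiv f (v # vs) = (\<lambda>x. frechet_derivative (iter_dderiv f vs) (at x) v)"

definition smooth_on :: "'a::real_normed_vector set \<Rightarrow> ('a \<Rightarrow> real) \<Rightarrow> bool" where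
  "smooth_on S f \<longleftrightarrow> (\<forall>vs. \<forall>x\<in>S. iter_dderiv f vs differentiable (at x))"

definition grad :: "('a::euclidean_space \<Rightarrow> real) \<Rightarrow> 'a \<Rightarrow> 'a" where
  "grad f x = (\<Sum>b\<in>Basis. frechet_derivative f (at x) b *\<^sub>R b)"

definition hess_form :: "('a::real_normed_vector \<Rightarrow> real) \<Rightarrow> 'a \<Rightarrow> 'a \<Rightarrow> real" where
  "hess_form f x v = frechet_derivative (\<lambda>z. frechet_derivative f (at z) v) (at x) v"

end

theory Submission
  imports Defs
begin

text \<open>Write \<open>\<phi>\<^sub>k = \<partial>\<^sub>t\<^sup>k Hh\<close> and \<open>\<gamma>(t) = y + (t/2) J\<^sup>-\<^sup>1\<nabla>Hh(y,t)\<close>. The PDE says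
  \<open>H(\<gamma>(t)) = \<phi>\<^sub>0 + t \<phi>\<^sub>1\<close>, and differentiating it \<open>k\<close> times in \<open>t\<close> gives
  \<open>(H\<circ>\<gamma>)\<^sup>(\<^sup>k\<^sup>) = (k+1) \<phi>\<^sub>k + t \<phi>\<^sub>k\<^sub>+\<^sub>1\<close>. At \<open>t = 0\<close> we have \<open>\<phi>\<^sub>0 = H\<close> and
  \<open>\<gamma>'(0) = v/2\<close> with \<open>v = J\<^sup>-\<^sup>1\<nabla>H\<close>; the skew-symmetry of \<open>J\<^sup>-\<^sup>1\<close> makes every term of the form
  \<open>\<beta>(J\<^sup>-\<^sup>1\<nabla>\<beta>)\<close> vanish, and together with the symmetry of mixed partial derivatives this yields
  \<open>\<phi>\<^sub>1(y,0) = 0\<close>, \<open>\<phi>\<^sub>2(y,0) = H''(v,v)/12\<close> and \<open>\<phi>\<^sub>3(y,0) = 0\<close>. Taylor's theorem in \<open>t\<close> then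
  gives \<open>Hh = H + h\<^sup>2 H''(v,v)/24 + O(h\<^sup>4)\<close> and \<open>\<nabla>\<^sup>2Hh(v,v) = H''(v,v) + O(h\<^sup>2)\<close>, with
  remainders bounded by continuous derivatives of \<open>Hh\<close> on a compact neighbourhood.\<close>

lemma linear_eq_sum_Basis:
  fixes g :: "'a::euclidean_space \<Rightarrow> real"
  assumes "linear g"
  shows "g u = (\<Sum>b\<in>Basis. (u \<bullet> b) * g b)"
proof -
  have "g u = g (\<Sum>b\<in>Basis. (u \<bullet> b) *\<^sub>R b)" by (simp add: euclidean_representation)
  also have "\<dots> = (\<Sum>b\<in>Basis. (u \<bullet> b) * g b)"
    using assms by (simp add: linear_sum linear_scale o_def)
  finally show ?thesis .
qed

lemma frechet_derivative_transform_within_open: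
  assumes "(g has_derivative G) (at x)" "open S" "x \<in> S" "\<And>z. z \<in> S \<Longrightarrow> g z = f z"
  shows "frechet_derivative f (at x) = G"
  using has_derivative_transform_within_open[OF assms] frechet_derivative_at by metis

lemma has_real_derivative_along_line:
  fixes f :: "'a::real_normed_vector \<Rightarrow> real"
  assumes "(f has_derivative F) (at (p + s *\<^sub>R a))"
  shows "((\<lambda>s. f (p + s *\<^sub>R a)) has_real_derivative F a) (at s)"
proof -
  have l: "linear F" using assms has_derivative_linear by blast
  have g: "((\<lambda>s. p + s *\<^sub>R a) has_derivative (\<lambda>d. d *\<^sub>R a)) (at s)"
    by (auto intro!: derivative_eq_intros)
  have "((\<lambda>s. f (p + s *\<^sub>R a)) has_derivative (\<lambda>d. F (d *\<^sub>R a))) (at s)"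
    using has_derivative_compose[OF g assms] .
  moreover have "(\<lambda>d. F (d *\<^sub>R a)) = (*) (F a)"
    using linear_scale[OF l] by (auto simp: mult.commute)
  ultimately show ?thesis by (simp add: has_field_derivative_def)
qed

lemma has_vector_derivative_scaleR_const:
  assumes "(c has_real_derivative c') (at t)"
  shows "((\<lambda>s. c s *\<^sub>R v) has_vector_derivative c' *\<^sub>R v) (at t)"
proof -
  have "((\<lambda>s. c s *\<^sub>R v) has_derivative (\<lambda>x. (c' * x) *\<^sub>R v)) (at t)"
    using has_derivative_scaleR_left[OF assms[unfolded has_field_derivative_def]] .
  then show ?thesis unfolding has_vector_derivative_def by (simp add: mult.commute)
qed

lemma DERIV_unique_cmult_add_ident_mult:
  fixes p a r :: "real \<Rightarrow> real"
  assumes U: "open U" "t \<in> U" and eq: "\<And>s. s \<in> U \<Longrightarrow> p s = c * a s + s * r s"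
    and dp: "(p has_real_derivative P) (at t)" and da: "(a has_real_derivative A) (at t)"
    and dr: "(r has_real_derivative R) (at t)"
  shows "P = c * A + r t + t * R"
proof -
  have "((\<lambda>s. c * a s + s * r s) has_real_derivative c * A + (1 * r t + R * t)) (at t)"
    by (intro DERIV_add DERIV_cmult DERIV_mult DERIV_ident da dr)
  then have "(p has_real_derivative c * A + (1 * r t + R * t)) (at t)"
    by (rule has_field_derivative_transform_within_open[OF _ U]) (simp add: eq)
  from DERIV_unique[OF dp this] show ?thesis by (simp add: algebra_simps)
qed

lemma Maclaurin_is_interval:
  fixes f :: "real \<Rightarrow> real" and U :: "real set"
  assumes U: "is_interval U" "0 \<in> U" "h \<in> U" and diff0: "diff 0 = f"
    and DERIV: "\<And>m t. t \<in> U \<Longrightarrow> (diff m has_real_derivative diff (Suc m) t) (at t)"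
  obtains t where "t \<in> U" "\<bar>t\<bar> \<le> \<bar>h\<bar>"
    "f h = (\<Sum>m<n. diff m 0 / fact m * h ^ m) + diff n t / fact n * h ^ n"
proof (cases "h = 0 \<or> n = 0")
  case True
  then show thesis
  proof
    assume "h = 0"
    then show thesis using that[of 0] U diff0 by (cases n) (simp_all add: sum.lessThan_Suc_shift)
  qed (use that[of h] U diff0 in simp)
next
  case False
  have seg: "t \<in> U" if "min 0 h \<le> t" "t \<le> max 0 h" for t
    using U that unfolding is_interval_1 by (metis max_def min_def)
  obtain t where t: "if h < 0 then h < t \<and> t < 0 else 0 < t \<and> t < h"
    "f h = (\<Sum>m<n. diff m 0 / fact m * (h - 0) ^ m) + diff n t / fact n * (h - 0) ^ n"
    using Taylor[of n diff f "min 0 h" "max 0 h" 0 h] False diff0 DERIV seg by auto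
  show thesis
    by (rule that[of t]) (use t seg in \<open>auto split: if_splits\<close>)
qed

subsection \<open>Iterated directional derivatives of smooth functions\<close>

lemma smooth_on_has_derivative:
  assumes "smooth_on S f" "x \<in> S"
  shows "(iter_dderiv f vs has_derivative (\<lambda>u. iter_dderiv f (u#vs) x)) (at x)"
proof -
  have "iter_dderiv f vs differentiable (at x)" using assms by (auto simp: smooth_on_def)
  then show ?thesis by (simp add: frechet_derivative_works)
qed

lemma smooth_on_continuous_at:
  assumes "smooth_on S f" "x \<in> S"
  shows "continuous (at x) (iter_dderiv f vs)"
  using assms by (auto simp: smooth_on_def intro: differentiable_imp_continuous_within)

lemma smooth_on_continuous_on:
  assumes "smooth_on S f"
  shows "continuous_on S (iter_dderiv f vs)"
  using smooth_on_continuous_at[OF assms] by (simp add: continuous_at_imp_continuous_on)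

lemma smooth_on_subset: "smooth_on T f \<Longrightarrow> S \<subseteq> T \<Longrightarrow> smooth_on S f"
  unfolding smooth_on_def by blast

lemma iter_dderiv_zero_fun: "iter_dderiv (\<lambda>_. 0::real) vs = (\<lambda>_::'a::real_normed_vector. 0)"
proof (induction vs)
  case Nil then show ?case by simp
next
  case (Cons v vs)
  have "frechet_derivative (\<lambda>_::'a. 0::real) (at x) = (\<lambda>_. 0)" for x
    using frechet_derivative_at[OF has_derivative_const[of "0::real" "at x"]] by simp
  then show ?case using Cons by simp
qed

lemma smooth_on_zero: "smooth_on S (\<lambda>_::'a::real_normed_vector. 0::real)"
  unfolding smooth_on_def iter_dderiv_zero_fun by simp

lemma iter_dderiv_sum_Basis:
  fixes f :: "'a::euclidean_space \<Rightarrow> real"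
  assumes sm: "smooth_on S f" and S: "open S"
  shows "x \<in> S \<Longrightarrow>
    iter_dderiv f (ws @ u # vs) x = (\<Sum>b\<in>Basis. (u \<bullet> b) * iter_dderiv f (ws @ b # vs) x)"
proof (induction ws arbitrary: x)
  case Nil
  have "linear (\<lambda>u. iter_dderiv f (u#vs) x)"
    using smooth_on_has_derivative[OF sm Nil] has_derivative_linear by blast
  then show ?case using linear_eq_sum_Basis by auto
next
  case (Cons a ws)
  have d: "((\<lambda>z. \<Sum>b\<in>Basis. (u \<bullet> b) * iter_dderiv f (ws @ b # vs) z) has_derivative
      (\<lambda>d. \<Sum>b\<in>Basis. (u \<bullet> b) * iter_dderiv f (d # ws @ b # vs) x)) (at x)"
    by (intro has_derivative_sum has_derivative_mult_right smooth_on_has_derivative[OF sm Cons.prems])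
  have "frechet_derivative (iter_dderiv f (ws @ u # vs)) (at x) =
      (\<lambda>d. \<Sum>b\<in>Basis. (u \<bullet> b) * iter_dderiv f (d # ws @ b # vs) x)"
    by (rule frechet_derivative_transform_within_open[OF d S Cons.prems]) (rule Cons.IH[symmetric])
  then show ?case by simp
qed

lemma linear_iter_dderiv:
  fixes f :: "'a::euclidean_space \<Rightarrow> real"
  assumes "smooth_on S f" "open S" "x \<in> S"
  shows "linear (\<lambda>u. iter_dderiv f (ws @ u # vs) x)"
proof -
  have "(\<lambda>u. \<Sum>b\<in>Basis. (u \<bullet> b) * iter_dderiv f (ws @ b # vs) x) =
      (\<lambda>u. u \<bullet> (\<Sum>b\<in>Basis. iter_dderiv f (ws @ b # vs) x *\<^sub>R b))"
    by (simp add: inner_sum_right mult.commute)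
  then have "linear (\<lambda>u. \<Sum>b\<in>Basis. (u \<bullet> b) * iter_dderiv f (ws @ b # vs) x)"
    using bounded_linear_inner_left bounded_linear.linear by metis
  moreover have "(\<lambda>u. iter_dderiv f (ws @ u # vs) x) =
      (\<lambda>u. \<Sum>b\<in>Basis. (u \<bullet> b) * iter_dderiv f (ws @ b # vs) x)"
    by (intro ext iter_dderiv_sum_Basis[OF assms])
  ultimately show ?thesis by simp
qed

lemma iter_dderiv_scaleR:
  fixes f :: "'a::euclidean_space \<Rightarrow> real"
  assumes "smooth_on S f" "open S" "x \<in> S"
  shows "iter_dderiv f (ws @ (c *\<^sub>R u) # vs) x = c * iter_dderiv f (ws @ u # vs) x"
  using linear_scale[OF linear_iter_dderiv[OF assms, of ws vs]] by simp

lemma iter_dderiv_zero_direction: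
  fixes f :: "'a::euclidean_space \<Rightarrow> real"
  assumes "smooth_on S f" "open S" "x \<in> S"
  shows "iter_dderiv f (ws @ 0 # vs) x = 0"
  using linear_0[OF linear_iter_dderiv[OF assms, of ws vs]] by simp

declare iter_dderiv.simps(2)[simp del]

subsection \<open>Symmetry of second derivatives\<close>

lemma second_difference_mean_value:
  fixes f :: "'a::real_normed_vector \<Rightarrow> real"
  assumes h: "0 < h"
    and inS: "\<And>\<sigma> \<tau>. 0 \<le> \<sigma> \<Longrightarrow> \<sigma> \<le> h \<Longrightarrow> 0 \<le> \<tau> \<Longrightarrow> \<tau> \<le> h \<Longrightarrow> x + \<sigma> *\<^sub>R a + \<tau> *\<^sub>R b \<in> S"
    and d1: "\<And>z. z \<in> S \<Longrightarrow> (f has_derivative Df z) (at z)"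
    and da: "\<And>z. z \<in> S \<Longrightarrow> ((\<lambda>w. Df w a) has_derivative Dfa z) (at z)"
  obtains \<sigma> \<tau> where "0 < \<sigma>" "\<sigma> < h" "0 < \<tau>" "\<tau> < h"
    "f (x + h *\<^sub>R a + h *\<^sub>R b) - f (x + h *\<^sub>R a) - f (x + h *\<^sub>R b) + f x
       = h * (h * Dfa (x + \<sigma> *\<^sub>R a + \<tau> *\<^sub>R b) b)"
proof -
  have pt: "(x + \<tau> *\<^sub>R b) + \<sigma> *\<^sub>R a = x + \<sigma> *\<^sub>R a + \<tau> *\<^sub>R b" for \<sigma> \<tau>
    by (simp add: algebra_simps)
  define \<alpha> where "\<alpha> s = f ((x + h *\<^sub>R b) + s *\<^sub>R a) - f ((x + 0 *\<^sub>R b) + s *\<^sub>R a)" for s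
  have "\<exists>z>0. z < h \<and> \<alpha> h - \<alpha> 0 =
      (h - 0) * (Df (x + z *\<^sub>R a + h *\<^sub>R b) a - Df (x + z *\<^sub>R a + 0 *\<^sub>R b) a)"
  proof (rule MVT2[OF h])
    fix s assume s: "0 \<le> s" "s \<le> h"
    have e: "(f has_derivative Df (x + s *\<^sub>R a + \<tau> *\<^sub>R b)) (at ((x + \<tau> *\<^sub>R b) + s *\<^sub>R a))"
      if "\<tau> = 0 \<or> \<tau> = h" for \<tau>
    proof -
      have "0 \<le> \<tau>" "\<tau> \<le> h" using that h by auto
      then show ?thesis unfolding pt using d1 inS s by blast
    qed
    show "(\<alpha> has_real_derivative
        Df (x + s *\<^sub>R a + h *\<^sub>R b) a - Df (x + s *\<^sub>R a + 0 *\<^sub>R b) a) (at s)"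
      unfolding \<alpha>_def by (intro DERIV_diff has_real_derivative_along_line e) auto
  qed
  then obtain \<sigma> where \<sigma>: "0 < \<sigma>" "\<sigma> < h"
    "\<alpha> h - \<alpha> 0 = h * (Df (x + \<sigma> *\<^sub>R a + h *\<^sub>R b) a - Df (x + \<sigma> *\<^sub>R a + 0 *\<^sub>R b) a)"
    by auto
  define \<beta> where "\<beta> t = Df ((x + \<sigma> *\<^sub>R a) + t *\<^sub>R b) a" for t
  have "\<exists>z>0. z < h \<and> \<beta> h - \<beta> 0 = (h - 0) * Dfa (x + \<sigma> *\<^sub>R a + z *\<^sub>R b) b"
  proof (rule MVT2[OF h])
    fix t assume t: "0 \<le> t" "t \<le> h"
    show "(\<beta> has_real_derivative Dfa (x + \<sigma> *\<^sub>R a + t *\<^sub>R b) b) (at t)"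
      unfolding \<beta>_def
      by (rule has_real_derivative_along_line[where f="\<lambda>w. Df w a"]) (use t \<sigma> inS da in auto)
  qed
  then obtain \<tau> where \<tau>: "0 < \<tau>" "\<tau> < h" "\<beta> h - \<beta> 0 = h * Dfa (x + \<sigma> *\<^sub>R a + \<tau> *\<^sub>R b) b"
    by auto
  have "f (x + h *\<^sub>R a + h *\<^sub>R b) - f (x + h *\<^sub>R a) - f (x + h *\<^sub>R b) + f x = \<alpha> h - \<alpha> 0"
    unfolding \<alpha>_def by (simp add: algebra_simps)
  also have "\<dots> = h * (\<beta> h - \<beta> 0)" using \<sigma>(3) unfolding \<beta>_def by simp
  finally show thesis using that \<sigma> \<tau> by simp
qed

text \<open>Schwarz's theorem, in the form needed for iterated directional derivatives: the second
  derivatives need only be continuous at the point itself.\<close>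
lemma symmetric_second_derivative:
  fixes f :: "'a::real_normed_vector \<Rightarrow> real"
  assumes S: "open S" "x \<in> S"
    and d1: "\<And>z. z \<in> S \<Longrightarrow> (f has_derivative Df z) (at z)"
    and da: "\<And>z. z \<in> S \<Longrightarrow> ((\<lambda>w. Df w a) has_derivative Dfa z) (at z)"
    and db: "\<And>z. z \<in> S \<Longrightarrow> ((\<lambda>w. Df w b) has_derivative Dfb z) (at z)"
    and ca: "continuous (at x) (\<lambda>z. Dfa z b)"
    and cb: "continuous (at x) (\<lambda>z. Dfb z a)"
  shows "Dfa x b = Dfb x a"
proof (rule ccontr)
  assume ne: "Dfa x b \<noteq> Dfb x a"
  define e where "e = \<bar>Dfa x b - Dfb x a\<bar> / 2"
  have e: "e > 0" using ne by (simp add: e_def)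
  obtain r1 where r1: "r1 > 0" "\<And>z. dist z x < r1 \<Longrightarrow> \<bar>Dfa z b - Dfa x b\<bar> < e"
    using ca e unfolding continuous_at_eps_delta dist_real_def by blast
  obtain r2 where r2: "r2 > 0" "\<And>z. dist z x < r2 \<Longrightarrow> \<bar>Dfb z a - Dfb x a\<bar> < e"
    using cb e unfolding continuous_at_eps_delta dist_real_def by blast
  obtain r3 where r3: "r3 > 0" "ball x r3 \<subseteq> S"
    using S open_contains_ball by blast
  define r where "r = min r1 (min r2 r3)"
  have r: "r > 0" using r1 r2 r3 by (simp add: r_def)
  define h where "h = r / (2 * (norm a + norm b + 1))"
  have ab: "norm a + norm b + 1 > 0" by (smt (verit) norm_ge_zero)
  have h: "h > 0" using r ab by (simp add: h_def)
  have near: "dist (x + \<sigma> *\<^sub>R a + \<tau> *\<^sub>R b) x < r"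
    if "0 \<le> \<sigma>" "\<sigma> \<le> h" "0 \<le> \<tau>" "\<tau> \<le> h" for \<sigma> \<tau>
  proof -
    have "dist (x + \<sigma> *\<^sub>R a + \<tau> *\<^sub>R b) x \<le> \<sigma> * norm a + \<tau> * norm b"
      using that norm_triangle_ineq[of "\<sigma> *\<^sub>R a" "\<tau> *\<^sub>R b"] by (simp add: dist_norm)
    also have "\<dots> \<le> h * norm a + h * norm b"
      using that by (intro add_mono mult_right_mono) auto
    also have "\<dots> < h * (2 * (norm a + norm b + 1))"
      using h ab by (simp add: algebra_simps) (smt (verit) mult_nonneg_nonneg norm_ge_zero)
    also have "\<dots> = r" using r ab by (simp add: h_def)
    finally show ?thesis .
  qed
  have inS: "x + \<sigma> *\<^sub>R a + \<tau> *\<^sub>R b \<in> S" "x + \<tau> *\<^sub>R b + \<sigma> *\<^sub>R a \<in> S"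
    if "0 \<le> \<sigma>" "\<sigma> \<le> h" "0 \<le> \<tau>" "\<tau> \<le> h" for \<sigma> \<tau>
    using near[OF that] r3 unfolding r_def by (auto simp: dist_commute add.assoc add.commute[of "\<tau> *\<^sub>R b"])
  obtain \<sigma>1 \<tau>1 where p1: "0 < \<sigma>1" "\<sigma>1 < h" "0 < \<tau>1" "\<tau>1 < h"
    "f (x + h *\<^sub>R a + h *\<^sub>R b) - f (x + h *\<^sub>R a) - f (x + h *\<^sub>R b) + f x
       = h * (h * Dfa (x + \<sigma>1 *\<^sub>R a + \<tau>1 *\<^sub>R b) b)"
    by (rule second_difference_mean_value[OF h inS(1) d1 da])
  obtain \<sigma>2 \<tau>2 where p2: "0 < \<sigma>2" "\<sigma>2 < h" "0 < \<tau>2" "\<tau>2 < h"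
    "f (x + h *\<^sub>R b + h *\<^sub>R a) - f (x + h *\<^sub>R b) - f (x + h *\<^sub>R a) + f x
       = h * (h * Dfb (x + \<sigma>2 *\<^sub>R b + \<tau>2 *\<^sub>R a) a)"
    by (rule second_difference_mean_value[OF h inS(2) d1 db])
  have "x + h *\<^sub>R b + h *\<^sub>R a = x + h *\<^sub>R a + h *\<^sub>R b" by (simp add: algebra_simps)
  with p1(5) p2(5) h have eq: "Dfa (x + \<sigma>1 *\<^sub>R a + \<tau>1 *\<^sub>R b) b = Dfb (x + \<tau>2 *\<^sub>R a + \<sigma>2 *\<^sub>R b) a"
    by (simp add: algebra_simps)
  have "\<bar>Dfa (x + \<sigma>1 *\<^sub>R a + \<tau>1 *\<^sub>R b) b - Dfa x b\<bar> < e"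
    using near[of \<sigma>1 \<tau>1] p1 r1 unfolding r_def by (simp add: dist_commute)
  moreover have "\<bar>Dfb (x + \<tau>2 *\<^sub>R a + \<sigma>2 *\<^sub>R b) a - Dfb x a\<bar> < e"
    using near[of \<tau>2 \<sigma>2] p2 r2 unfolding r_def by (simp add: dist_commute)
  ultimately show False using eq unfolding e_def by (smt (verit) field_sum_of_halves)
qed

lemma iter_dderiv_swap:
  fixes f :: "'a::euclidean_space \<Rightarrow> real"
  assumes sm: "smooth_on S f" and S: "open S" "x \<in> S"
  shows "iter_dderiv f (a#b#vs) x = iter_dderiv f (b#a#vs) x"
proof -
  have "(\<lambda>z u. iter_dderiv f (u#a#vs) z) x b = (\<lambda>z u. iter_dderiv f (u#b#vs) z) x a"
    by (rule symmetric_second_derivative[where f="iter_dderiv f vs" and S=S])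
      (use S smooth_on_has_derivative[OF sm] smooth_on_continuous_at[OF sm S(2)] in auto)
  then show ?thesis by simp
qed

lemma iter_dderiv_swap_Cons:
  fixes f :: "'a::euclidean_space \<Rightarrow> real"
  assumes sm: "smooth_on S f" and S: "open S" "x \<in> S"
  shows "iter_dderiv f (c#a#b#vs) x = iter_dderiv f (c#b#a#vs) x"
proof -
  have "frechet_derivative (iter_dderiv f (a#b#vs)) (at x) = (\<lambda>u. iter_dderiv f (u#b#a#vs) x)"
    by (rule frechet_derivative_transform_within_open[OF smooth_on_has_derivative[OF sm S(2)] S])
      (rule iter_dderiv_swap[OF sm S(1)], simp)
  then show ?thesis by (simp add: iter_dderiv.simps)
qed

subsection \<open>Chain rules\<close>

lemma has_derivative_iter_dderiv_compose:
  fixes f :: "'a::euclidean_space \<Rightarrow> real" and g :: "'b::real_normed_vector \<Rightarrow> 'a"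
  assumes sm: "smooth_on S f" and gx: "g x \<in> S" and dg: "(g has_derivative G) (at x)"
  shows "((\<lambda>z. iter_dderiv f vs (g z)) has_derivative (\<lambda>d. iter_dderiv f (G d # vs) (g x))) (at x)"
  using has_derivative_compose[OF dg smooth_on_has_derivative[OF sm gx]] .

lemma has_derivative_iter_dderiv_compose_direction:
  fixes f :: "'a::euclidean_space \<Rightarrow> real" and g :: "'b::real_normed_vector \<Rightarrow> 'a"
  assumes sm: "smooth_on UNIV f" and dg: "(g has_derivative G) (at x)"
    and du: "(u has_derivative Du) (at x)"
  shows "((\<lambda>z. iter_dderiv f (u z # vs) (g z)) has_derivative
     (\<lambda>d. iter_dderiv f (G d # u x # vs) (g x) + iter_dderiv f (Du d # vs) (g x))) (at x)"
proof -
  note expand = iter_dderiv_sum_Basis[OF sm open_UNIV UNIV_I]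
  have "(\<lambda>z. iter_dderiv f (u z # vs) (g z)) =
      (\<lambda>z. \<Sum>b\<in>Basis. (u z \<bullet> b) * iter_dderiv f (b # vs) (g z))"
  proof
    fix z
    show "iter_dderiv f (u z # vs) (g z) = (\<Sum>b\<in>Basis. (u z \<bullet> b) * iter_dderiv f (b # vs) (g z))"
      using expand[where x="g z" and ws="[]" and u="u z" and vs=vs] by simp
  qed
  moreover have "((\<lambda>z. \<Sum>b\<in>Basis. (u z \<bullet> b) * iter_dderiv f (b # vs) (g z)) has_derivative
     (\<lambda>d. \<Sum>b\<in>Basis. (u x \<bullet> b) * iter_dderiv f (G d # b # vs) (g x)
        + (Du d \<bullet> b) * iter_dderiv f (b # vs) (g x))) (at x)"
    by (intro has_derivative_sum has_derivative_mult has_derivative_inner_left du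
        has_derivative_iter_dderiv_compose[OF sm _ dg]) auto
  moreover have "(\<lambda>d. \<Sum>b\<in>Basis. (u x \<bullet> b) * iter_dderiv f (G d # b # vs) (g x)
        + (Du d \<bullet> b) * iter_dderiv f (b # vs) (g x))
     = (\<lambda>d. iter_dderiv f (G d # u x # vs) (g x) + iter_dderiv f (Du d # vs) (g x))"
  proof
    fix d
    show "(\<Sum>b\<in>Basis. (u x \<bullet> b) * iter_dderiv f (G d # b # vs) (g x)
        + (Du d \<bullet> b) * iter_dderiv f (b # vs) (g x))
      = iter_dderiv f (G d # u x # vs) (g x) + iter_dderiv f (Du d # vs) (g x)"
      using expand[where x="g x" and ws="[G d]" and u="u x" and vs=vs] expand[where x="g x" and ws="[]" and u="Du d" and vs=vs]
      by (simp add: sum.distrib)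
  qed
  ultimately show ?thesis by simp
qed

lemma has_derivative_iter_dderiv_compose_directions:
  fixes f :: "'a::euclidean_space \<Rightarrow> real" and g :: "'b::real_normed_vector \<Rightarrow> 'a"
  assumes sm: "smooth_on UNIV f" and dg: "(g has_derivative G) (at x)"
    and du1: "(u1 has_derivative Du1) (at x)" and du2: "(u2 has_derivative Du2) (at x)"
  shows "((\<lambda>z. iter_dderiv f (u1 z # u2 z # vs) (g z)) has_derivative
     (\<lambda>d. iter_dderiv f (G d # u1 x # u2 x # vs) (g x) + iter_dderiv f (Du1 d # u2 x # vs) (g x)
        + iter_dderiv f (u1 x # Du2 d # vs) (g x))) (at x)"
proof -
  note expand = iter_dderiv_sum_Basis[OF sm open_UNIV UNIV_I]
  have "(\<lambda>z. iter_dderiv f (u1 z # u2 z # vs) (g z)) =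
      (\<lambda>z. \<Sum>b\<in>Basis. (u2 z \<bullet> b) * iter_dderiv f (u1 z # b # vs) (g z))"
  proof
    fix z
    show "iter_dderiv f (u1 z # u2 z # vs) (g z) =
      (\<Sum>b\<in>Basis. (u2 z \<bullet> b) * iter_dderiv f (u1 z # b # vs) (g z))"
      using expand[where x="g z" and ws="[u1 z]" and u="u2 z" and vs=vs] by simp
  qed
  moreover have "((\<lambda>z. \<Sum>b\<in>Basis. (u2 z \<bullet> b) * iter_dderiv f (u1 z # b # vs) (g z)) has_derivative
     (\<lambda>d. \<Sum>b\<in>Basis. (u2 x \<bullet> b) * (iter_dderiv f (G d # u1 x # b # vs) (g x)
        + iter_dderiv f (Du1 d # b # vs) (g x)) + (Du2 d \<bullet> b) * iter_dderiv f (u1 x # b # vs) (g x))) (at x)"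
    by (intro has_derivative_sum has_derivative_mult has_derivative_inner_left du2
        has_derivative_iter_dderiv_compose_direction[OF sm dg du1])
  moreover have "(\<lambda>d. \<Sum>b\<in>Basis. (u2 x \<bullet> b) * (iter_dderiv f (G d # u1 x # b # vs) (g x)
        + iter_dderiv f (Du1 d # b # vs) (g x)) + (Du2 d \<bullet> b) * iter_dderiv f (u1 x # b # vs) (g x))
     = (\<lambda>d. iter_dderiv f (G d # u1 x # u2 x # vs) (g x) + iter_dderiv f (Du1 d # u2 x # vs) (g x)
        + iter_dderiv f (u1 x # Du2 d # vs) (g x))"
  proof
    fix d
    show "(\<Sum>b\<in>Basis. (u2 x \<bullet> b) * (iter_dderiv f (G d # u1 x # b # vs) (g x)
        + iter_dderiv f (Du1 d # b # vs) (g x)) + (Du2 d \<bullet> b) * iter_dderiv f (u1 x # b # vs) (g x))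
      = iter_dderiv f (G d # u1 x # u2 x # vs) (g x) + iter_dderiv f (Du1 d # u2 x # vs) (g x)
        + iter_dderiv f (u1 x # Du2 d # vs) (g x)"
      using expand[where x="g x" and ws="[G d, u1 x]" and u="u2 x" and vs=vs] expand[where x="g x" and ws="[Du1 d]" and u="u2 x" and vs=vs]
        expand[where x="g x" and ws="[u1 x]" and u="Du2 d" and vs=vs]
      by (simp add: sum.distrib distrib_left)
  qed
  ultimately show ?thesis by simp
qed

lemma DERIV_iter_dderiv_compose:
  fixes f :: "'a::euclidean_space \<Rightarrow> real" and g :: "real \<Rightarrow> 'a"
  assumes sm: "smooth_on S f" and S: "open S" and gt: "g t \<in> S"
    and dg: "(g has_vector_derivative g') (at t)"
  shows "((\<lambda>s. iter_dderiv f vs (g s)) has_real_derivative iter_dderiv f (g' # vs) (g t)) (at t)"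
proof -
  have "((\<lambda>s. iter_dderiv f vs (g s)) has_derivative (\<lambda>d. iter_dderiv f ((d *\<^sub>R g') # vs) (g t))) (at t)"
    by (rule has_derivative_iter_dderiv_compose[OF sm gt dg[unfolded has_vector_derivative_def]])
  moreover have "(\<lambda>d. iter_dderiv f ((d *\<^sub>R g') # vs) (g t)) = (*) (iter_dderiv f (g' # vs) (g t))"
    using iter_dderiv_scaleR[OF sm S gt, where ws="[]"] by (auto simp: mult.commute)
  ultimately show ?thesis by (simp add: has_field_derivative_def)
qed

lemma DERIV_iter_dderiv_compose_direction:
  fixes f :: "'a::euclidean_space \<Rightarrow> real" and g :: "real \<Rightarrow> 'a"
  assumes sm: "smooth_on UNIV f" and dg: "(g has_vector_derivative g') (at t)"
    and du: "(u has_vector_derivative u') (at t)"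
  shows "((\<lambda>s. iter_dderiv f (u s # vs) (g s)) has_real_derivative
      iter_dderiv f (g' # u t # vs) (g t) + iter_dderiv f (u' # vs) (g t)) (at t)"
proof -
  have "((\<lambda>s. iter_dderiv f (u s # vs) (g s)) has_derivative
     (\<lambda>d. iter_dderiv f ((d *\<^sub>R g') # u t # vs) (g t) + iter_dderiv f ((d *\<^sub>R u') # vs) (g t))) (at t)"
    by (rule has_derivative_iter_dderiv_compose_direction[OF sm
          dg[unfolded has_vector_derivative_def] du[unfolded has_vector_derivative_def]])
  moreover have "(\<lambda>d. iter_dderiv f ((d *\<^sub>R g') # u t # vs) (g t) + iter_dderiv f ((d *\<^sub>R u') # vs) (g t))
      = (*) (iter_dderiv f (g' # u t # vs) (g t) + iter_dderiv f (u' # vs) (g t))"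
    using iter_dderiv_scaleR[OF sm open_UNIV UNIV_I, where ws="[]"] by (auto simp: algebra_simps)
  ultimately show ?thesis by (simp add: has_field_derivative_def)
qed

lemma DERIV_iter_dderiv_compose_directions:
  fixes f :: "'a::euclidean_space \<Rightarrow> real" and g :: "real \<Rightarrow> 'a"
  assumes sm: "smooth_on UNIV f" and dg: "(g has_vector_derivative g') (at t)"
    and du1: "(u1 has_vector_derivative u1') (at t)" and du2: "(u2 has_vector_derivative u2') (at t)"
  shows "((\<lambda>s. iter_dderiv f (u1 s # u2 s # vs) (g s)) has_real_derivative
      iter_dderiv f (g' # u1 t # u2 t # vs) (g t) + iter_dderiv f (u1' # u2 t # vs) (g t)
      + iter_dderiv f (u1 t # u2' # vs) (g t)) (at t)"
proof -
  have "((\<lambda>s. iter_dderiv f (u1 s # u2 s # vs) (g s)) has_derivative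
     (\<lambda>d. iter_dderiv f ((d *\<^sub>R g') # u1 t # u2 t # vs) (g t)
        + iter_dderiv f ((d *\<^sub>R u1') # u2 t # vs) (g t)
        + iter_dderiv f (u1 t # (d *\<^sub>R u2') # vs) (g t))) (at t)"
    by (rule has_derivative_iter_dderiv_compose_directions[OF sm dg[unfolded has_vector_derivative_def]
          du1[unfolded has_vector_derivative_def] du2[unfolded has_vector_derivative_def]])
  moreover have "(\<lambda>d. iter_dderiv f ((d *\<^sub>R g') # u1 t # u2 t # vs) (g t)
        + iter_dderiv f ((d *\<^sub>R u1') # u2 t # vs) (g t)
        + iter_dderiv f (u1 t # (d *\<^sub>R u2') # vs) (g t))
      = (*) (iter_dderiv f (g' # u1 t # u2 t # vs) (g t) + iter_dderiv f (u1' # u2 t # vs) (g t)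
        + iter_dderiv f (u1 t # u2' # vs) (g t))"
    using iter_dderiv_scaleR[OF sm open_UNIV UNIV_I, where ws="[]"]
      iter_dderiv_scaleR[OF sm open_UNIV UNIV_I, where ws="[u1 t]"]
    by (auto simp: algebra_simps)
  ultimately show ?thesis by (simp add: has_field_derivative_def)
qed

subsection \<open>The symplectic structure\<close>

lemma linear_Jinv: "linear Jinv"
  by (rule linearI) (auto simp: Jinv_def)

lemma inner_Jinv_skew: "Jinv x \<bullet> y = - (Jinv y \<bullet> x)"
  by (simp add: Jinv_def inner_prod_def inner_commute)

text \<open>With \<open>\<nabla>\<beta> = \<Sum>\<^sub>b \<beta> b \<cdot> b\<close> this is \<open>\<alpha>(J\<^sup>-\<^sup>1\<nabla>\<beta>) = -\<beta>(J\<^sup>-\<^sup>1\<nabla>\<alpha>)\<close>; in particular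
  \<open>\<beta>(J\<^sup>-\<^sup>1\<nabla>\<beta>) = 0\<close>.\<close>
lemma sum_Basis_Jinv_skew:
  fixes \<alpha> \<beta> :: "((real^'n) \<times> (real^'n)) \<Rightarrow> real"
  assumes "linear \<alpha>" "linear \<beta>"
  shows "\<alpha> (\<Sum>b\<in>Basis. \<beta> b *\<^sub>R Jinv b) = - \<beta> (\<Sum>b\<in>Basis. \<alpha> b *\<^sub>R Jinv b)"
proof -
  have "\<alpha> (\<Sum>b\<in>Basis. \<beta> b *\<^sub>R Jinv b) = (\<Sum>b\<in>Basis. \<beta> b * \<alpha> (Jinv b))"
    using assms(1) by (simp add: linear_sum linear_scale o_def)
  also have "\<dots> = (\<Sum>b\<in>Basis. \<Sum>c\<in>Basis. \<beta> b * ((Jinv b \<bullet> c) * \<alpha> c))"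
    using linear_eq_sum_Basis[OF assms(1), of "Jinv b" for b] by (simp add: sum_distrib_left)
  also have "\<dots> = (\<Sum>c\<in>Basis. \<Sum>b\<in>Basis. - (\<alpha> c * ((Jinv c \<bullet> b) * \<beta> b)))"
  proof (subst sum.swap, intro sum.cong refl)
    fix b c
    show "\<beta> b * ((Jinv b \<bullet> c) * \<alpha> c) = - (\<alpha> c * ((Jinv c \<bullet> b) * \<beta> b))"
      using inner_Jinv_skew[of b c] by simp
  qed
  also have "\<dots> = - (\<Sum>c\<in>Basis. \<alpha> c * \<beta> (Jinv c))"
    using linear_eq_sum_Basis[OF assms(2), of "Jinv c" for c] by (simp add: sum_distrib_left sum_negf)
  also have "\<dots> = - \<beta> (\<Sum>c\<in>Basis. \<alpha> c *\<^sub>R Jinv c)"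
    using assms(2) by (simp add: linear_sum linear_scale o_def)
  finally show ?thesis .
qed

lemma continuous_on_iter_dderiv_directions:
  fixes f :: "'a::euclidean_space \<Rightarrow> real"
  assumes sm: "smooth_on S f" and S: "open S"
    and u: "continuous_on S u" and w: "continuous_on S w"
  shows "continuous_on S (\<lambda>p. iter_dderiv f (ws @ [u p, w p]) p)"
proof -
  note expand = iter_dderiv_sum_Basis[OF sm S]
  have "iter_dderiv f (ws @ [u p, w p]) p =
      (\<Sum>c\<in>Basis. (u p \<bullet> c) * (\<Sum>d\<in>Basis. (w p \<bullet> d) * iter_dderiv f (ws @ [c, d]) p))"
    if p: "p \<in> S" for p
  proof -
    have "iter_dderiv f (ws @ [u p, w p]) p =
        (\<Sum>c\<in>Basis. (u p \<bullet> c) * iter_dderiv f (ws @ [c, w p]) p)"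
      using expand[OF p, where ws=ws and u="u p" and vs="[w p]"] by simp
    also have "\<dots> = (\<Sum>c\<in>Basis. (u p \<bullet> c) * (\<Sum>d\<in>Basis. (w p \<bullet> d) * iter_dderiv f (ws @ [c, d]) p))"
    proof (intro sum.cong refl)
      fix c
      show "(u p \<bullet> c) * iter_dderiv f (ws @ [c, w p]) p =
          (u p \<bullet> c) * (\<Sum>d\<in>Basis. (w p \<bullet> d) * iter_dderiv f (ws @ [c, d]) p)"
        using expand[OF p, where ws="ws @ [c]" and u="w p" and vs="[]"] by simp
    qed
    finally show ?thesis .
  qed
  moreover have "continuous_on S
      (\<lambda>p. \<Sum>c\<in>Basis. (u p \<bullet> c) * (\<Sum>d\<in>Basis. (w p \<bullet> d) * iter_dderiv f (ws @ [c, d]) p))"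
    by (intro continuous_intros u w smooth_on_continuous_on[OF sm])
  ultimately show ?thesis using continuous_on_cong by (metis (no_types, lifting))
qed

subsection \<open>Consequences of the modified-Hamiltonian PDE\<close>

locale modified_hamiltonian =
  fixes H :: "((real^'n) \<times> (real^'n)) \<Rightarrow> real"
    and Hh :: "((real^'n) \<times> (real^'n)) \<times> real \<Rightarrow> real"
    and V :: "((real^'n) \<times> (real^'n)) set"
    and U :: "real set"
  assumes H_smooth: "smooth_on UNIV H"
    and V_open: "open V" and U_open: "open U" and U_interval: "is_interval U" and U0: "0 \<in> U"
    and Hh_smooth: "smooth_on (V \<times> U) Hh"
    and PDE: "\<And>y t. y \<in> V \<Longrightarrow> t \<in> U \<Longrightarrow>
       ((\<lambda>s. s * Hh (y, s)) has_real_derivative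
          H (y + (t / 2) *\<^sub>R Jinv (grad (\<lambda>z. Hh (z, t)) y))) (at t)"
begin

text \<open>Derivatives of \<open>Hh\<close> in the \<open>y\<close>-direction \<open>u\<close> and in \<open>t\<close> are directional derivatives
  along \<open>(u,0)\<close> and \<open>(0,1)\<close>.\<close>

definition dt_Hh :: "nat \<Rightarrow> (real^'n) \<times> (real^'n) \<Rightarrow> real \<Rightarrow> real" where
  "dt_Hh k y t = iter_dderiv Hh (replicate k (0,1)) (y,t)"

definition Jgrad_dt_Hh :: "nat \<Rightarrow> (real^'n) \<times> (real^'n) \<Rightarrow> real \<Rightarrow> (real^'n) \<times> (real^'n)" where
  "Jgrad_dt_Hh k y t = (\<Sum>b\<in>Basis. iter_dderiv Hh (replicate k (0,1) @ [(b,0)]) (y,t) *\<^sub>R Jinv b)"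

definition Jgrad_H :: "(real^'n) \<times> (real^'n) \<Rightarrow> (real^'n) \<times> (real^'n)" where
  "Jgrad_H y = (\<Sum>b\<in>Basis. iter_dderiv H [b] y *\<^sub>R Jinv b)"

definition pde_curve :: "(real^'n) \<times> (real^'n) \<Rightarrow> real \<Rightarrow> (real^'n) \<times> (real^'n)" where
  "pde_curve y t = y + (t/2) *\<^sub>R Jgrad_dt_Hh 0 y t"

definition pde_curve' :: "(real^'n) \<times> (real^'n) \<Rightarrow> real \<Rightarrow> (real^'n) \<times> (real^'n)" where
  "pde_curve' y t = (1/2) *\<^sub>R Jgrad_dt_Hh 0 y t + (t/2) *\<^sub>R Jgrad_dt_Hh 1 y t"

definition pde_curve'' :: "(real^'n) \<times> (real^'n) \<Rightarrow> real \<Rightarrow> (real^'n) \<times> (real^'n)" where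
  "pde_curve'' y t = Jgrad_dt_Hh 1 y t + (t/2) *\<^sub>R Jgrad_dt_Hh 2 y t"

definition pde_curve''' :: "(real^'n) \<times> (real^'n) \<Rightarrow> real \<Rightarrow> (real^'n) \<times> (real^'n)" where
  "pde_curve''' y t = (3/2) *\<^sub>R Jgrad_dt_Hh 2 y t + (t/2) *\<^sub>R Jgrad_dt_Hh 3 y t"

lemma open_V_times_U: "open (V \<times> U)"
  using V_open U_open by (rule open_Times)

lemma has_derivative_Hh_space:
  assumes "z \<in> V" "t \<in> U"
  shows "((\<lambda>z. iter_dderiv Hh vs (z,t)) has_derivative (\<lambda>u. iter_dderiv Hh ((u,0)#vs) (z,t))) (at z)"
proof -
  have "((\<lambda>z. (z,t)) has_derivative (\<lambda>u. (u,0))) (at z)"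
    by (rule has_derivative_Pair[OF has_derivative_ident has_derivative_const])
  from has_derivative_iter_dderiv_compose[OF Hh_smooth _ this] assms show ?thesis by auto
qed

lemma DERIV_Hh_time:
  assumes "z \<in> V" "s \<in> U"
  shows "((\<lambda>s. iter_dderiv Hh vs (z,s)) has_real_derivative iter_dderiv Hh ((0,1)#vs) (z,s)) (at s)"
proof -
  have "((\<lambda>s. (z,s)) has_derivative (\<lambda>d. (0,d))) (at s)"
    by (rule has_derivative_Pair[OF has_derivative_const has_derivative_ident])
  then have "((\<lambda>s. (z,s)) has_vector_derivative (0,1)) (at s)"
    unfolding has_vector_derivative_def by (simp add: has_derivative_eq_rhs)
  from DERIV_iter_dderiv_compose[OF Hh_smooth open_V_times_U _ this] assms show ?thesis by auto
qed

lemma DERIV_dt_Hh: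
  assumes "y \<in> V" "t \<in> U"
  shows "(dt_Hh k y has_real_derivative dt_Hh (Suc k) y t) (at t)"
  unfolding dt_Hh_def using DERIV_Hh_time[OF assms, of "replicate k (0,1)"] by simp

lemma frechet_derivative_Hh_space:
  assumes "z \<in> V" "t \<in> U"
  shows "frechet_derivative (\<lambda>z. Hh (z,t)) (at z) = (\<lambda>u. iter_dderiv Hh [(u,0)] (z,t))"
  using frechet_derivative_at[OF has_derivative_Hh_space[OF assms, of "[]"]] by simp

lemma Jinv_grad_Hh:
  assumes "y \<in> V" "t \<in> U"
  shows "Jinv (grad (\<lambda>z. Hh (z,t)) y) = Jgrad_dt_Hh 0 y t"
  unfolding grad_def Jgrad_dt_Hh_def frechet_derivative_Hh_space[OF assms]
  by (simp add: linear_sum[OF linear_Jinv] linear_scale[OF linear_Jinv] o_def)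

lemma Jinv_grad_H: "Jinv (grad H y) = Jgrad_H y"
  unfolding grad_def Jgrad_H_def
  by (simp add: linear_sum[OF linear_Jinv] linear_scale[OF linear_Jinv] o_def iter_dderiv.simps(2))

lemma hess_form_Hh:
  assumes "z \<in> V" "t \<in> U"
  shows "hess_form (\<lambda>z. Hh (z,t)) z v = iter_dderiv Hh [(v,0),(v,0)] (z,t)"
proof -
  have "frechet_derivative (\<lambda>z'. frechet_derivative (\<lambda>z. Hh (z, t)) (at z') v) (at z)
      = (\<lambda>u. iter_dderiv Hh [(u,0),(v,0)] (z,t))"
    by (rule frechet_derivative_transform_within_open[OF has_derivative_Hh_space[OF assms] V_open assms(1)])
      (simp add: frechet_derivative_Hh_space assms)
  then show ?thesis unfolding hess_form_def by simp
qed

lemma iter_dderiv_Hh_slice_Cons: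
  assumes t0: "t0 \<in> U" and z: "z \<in> V"
    and eq: "\<And>z'. z' \<in> V \<Longrightarrow> iter_dderiv Hh ws (z',t0) = g z'"
    and dg: "(g has_derivative G) (at z)"
  shows "iter_dderiv Hh ((u,0)#ws) (z,t0) = G u"
proof -
  have "(g has_derivative (\<lambda>u. iter_dderiv Hh ((u,0)#ws) (z,t0))) (at z)"
    by (rule has_derivative_transform_within_open[OF has_derivative_Hh_space[OF z t0] V_open z])
      (simp add: eq)
  from has_derivative_unique[OF this dg] show ?thesis by metis
qed

lemma iter_dderiv_Hh_slice:
  assumes sg: "smooth_on V g" and t0: "t0 \<in> U"
    and eq: "\<And>z'. z' \<in> V \<Longrightarrow> iter_dderiv Hh ws (z',t0) = g z'"
  shows "z \<in> V \<Longrightarrow> iter_dderiv Hh (map (\<lambda>u. (u,0)) us @ ws) (z,t0) = iter_dderiv g us z"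
proof (induction us arbitrary: z)
  case Nil
  then show ?case using eq by simp
next
  case (Cons u us)
  have "iter_dderiv Hh ((u,0) # (map (\<lambda>u. (u,0)) us @ ws)) (z,t0) = iter_dderiv g (u#us) z"
    by (rule iter_dderiv_Hh_slice_Cons[OF t0 Cons.prems Cons.IH smooth_on_has_derivative[OF sg Cons.prems]])
  then show ?case by simp
qed

text \<open>The factor \<open>1\<close> gives the shape \<open>c * a t + t * r t\<close> in which the identity and its
  \<open>t\<close>-derivatives are differentiated once more.\<close>
lemma pde_identity:
  assumes "y \<in> V" "t \<in> U"
  shows "H (pde_curve y t) = 1 * dt_Hh 0 y t + t * dt_Hh 1 y t"
proof -
  have "((\<lambda>s. s * Hh (y,s)) has_real_derivative 1 * Hh (y,t) + dt_Hh 1 y t * t) (at t)"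
    using DERIV_Hh_time[OF assms, of "[]"] by (intro DERIV_mult DERIV_ident) (simp add: dt_Hh_def)
  from DERIV_unique[OF PDE[OF assms] this] show ?thesis
    using Jinv_grad_Hh[OF assms] by (simp add: pde_curve_def dt_Hh_def)
qed

lemma Hh_at_0: "y \<in> V \<Longrightarrow> Hh (y,0) = H y"
  using pde_identity[of y 0] U0 by (simp add: pde_curve_def dt_Hh_def)

lemma DERIV_Jgrad_dt_Hh:
  assumes "y \<in> V" "t \<in> U"
  shows "(Jgrad_dt_Hh k y has_vector_derivative Jgrad_dt_Hh (Suc k) y t) (at t)"
proof -
  have "((\<lambda>t. \<Sum>b\<in>Basis. iter_dderiv Hh (replicate k (0,1) @ [(b,0)]) (y,t) *\<^sub>R Jinv b)
      has_vector_derivative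
      (\<Sum>b\<in>Basis. iter_dderiv Hh ((0,1) # replicate k (0,1) @ [(b,0)]) (y,t) *\<^sub>R Jinv b)) (at t)"
    by (intro has_vector_derivative_sum has_vector_derivative_scaleR_const DERIV_Hh_time assms)
  then show ?thesis unfolding Jgrad_dt_Hh_def[abs_def] by simp
qed

lemma DERIV_Jgrad_dt_Hh_affine:
  assumes "y \<in> V" "t \<in> U"
  shows "((\<lambda>s. c *\<^sub>R Jgrad_dt_Hh k y s + (s/2) *\<^sub>R Jgrad_dt_Hh (Suc k) y s) has_vector_derivative
      (c + 1/2) *\<^sub>R Jgrad_dt_Hh (Suc k) y t + (t/2) *\<^sub>R Jgrad_dt_Hh (Suc (Suc k)) y t) (at t)"
proof -
  have "((\<lambda>s. c *\<^sub>R Jgrad_dt_Hh k y s + (s/2) *\<^sub>R Jgrad_dt_Hh (Suc k) y s) has_vector_derivative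
      (c *\<^sub>R Jgrad_dt_Hh (Suc k) y t + 0 *\<^sub>R Jgrad_dt_Hh k y t)
      + ((t/2) *\<^sub>R Jgrad_dt_Hh (Suc (Suc k)) y t + (1/2) *\<^sub>R Jgrad_dt_Hh (Suc k) y t)) (at t)"
    by (intro has_vector_derivative_add has_vector_derivative_scaleR DERIV_Jgrad_dt_Hh assms
        derivative_eq_intros) auto
  then show ?thesis by (simp add: scaleR_add_left algebra_simps)
qed

lemma DERIV_pde_curve:
  assumes "y \<in> V" "t \<in> U"
  shows "(pde_curve y has_vector_derivative pde_curve' y t) (at t)"
    and "(pde_curve' y has_vector_derivative pde_curve'' y t) (at t)"
    and "(pde_curve'' y has_vector_derivative pde_curve''' y t) (at t)"
proof -
  have "((\<lambda>s. y + (s/2) *\<^sub>R Jgrad_dt_Hh 0 y s) has_vector_derivative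
      0 + ((t/2) *\<^sub>R Jgrad_dt_Hh (Suc 0) y t + (1/2) *\<^sub>R Jgrad_dt_Hh 0 y t)) (at t)"
    by (intro has_vector_derivative_add has_vector_derivative_const has_vector_derivative_scaleR
        DERIV_Jgrad_dt_Hh assms derivative_eq_intros) auto
  then show "(pde_curve y has_vector_derivative pde_curve' y t) (at t)"
    unfolding pde_curve_def[abs_def] pde_curve'_def by (simp add: algebra_simps)
  show "(pde_curve' y has_vector_derivative pde_curve'' y t) (at t)"
    using DERIV_Jgrad_dt_Hh_affine[OF assms, of "1/2" 0]
    unfolding pde_curve'_def[abs_def] pde_curve''_def by (simp add: numeral_2_eq_2)
  show "(pde_curve'' y has_vector_derivative pde_curve''' y t) (at t)"
    using DERIV_Jgrad_dt_Hh_affine[OF assms, of 1 1]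
    unfolding pde_curve''_def[abs_def] pde_curve'''_def by (simp add: numeral_2_eq_2 numeral_3_eq_3)
qed

lemma DERIV_dt_Hh_numerals:
  assumes "y \<in> V" "t \<in> U"
  shows "(dt_Hh 0 y has_real_derivative dt_Hh 1 y t) (at t)"
    and "(dt_Hh 1 y has_real_derivative dt_Hh 2 y t) (at t)"
    and "(dt_Hh 2 y has_real_derivative dt_Hh 3 y t) (at t)"
  using DERIV_dt_Hh[OF assms, of 0] DERIV_dt_Hh[OF assms, of 1] DERIV_dt_Hh[OF assms, of 2]
  by (simp_all add: numeral_3_eq_3 numeral_2_eq_2)

lemma pde_identity_1:
  assumes "y \<in> V" "t \<in> U"
  shows "iter_dderiv H [pde_curve' y t] (pde_curve y t) = 2 * dt_Hh 1 y t + t * dt_Hh 2 y t"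
proof -
  have "((\<lambda>s. H (pde_curve y s)) has_real_derivative iter_dderiv H [pde_curve' y t] (pde_curve y t)) (at t)"
    using DERIV_iter_dderiv_compose[OF H_smooth open_UNIV UNIV_I DERIV_pde_curve(1)[OF assms], of "[]"]
    by simp
  from DERIV_unique_cmult_add_ident_mult[OF U_open assms(2) pde_identity[OF assms(1)] this
      DERIV_dt_Hh_numerals(1,2)[OF assms]]
  show ?thesis by simp
qed

lemma pde_identity_2:
  assumes "y \<in> V" "t \<in> U"
  shows "iter_dderiv H [pde_curve' y t, pde_curve' y t] (pde_curve y t)
      + iter_dderiv H [pde_curve'' y t] (pde_curve y t) = 3 * dt_Hh 2 y t + t * dt_Hh 3 y t"
proof -
  have "((\<lambda>s. iter_dderiv H [pde_curve' y s] (pde_curve y s)) has_real_derivative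
      iter_dderiv H [pde_curve' y t, pde_curve' y t] (pde_curve y t)
      + iter_dderiv H [pde_curve'' y t] (pde_curve y t)) (at t)"
    using DERIV_iter_dderiv_compose_direction[OF H_smooth DERIV_pde_curve(1,2)[OF assms], of "[]"]
    by simp
  from DERIV_unique_cmult_add_ident_mult[OF U_open assms(2) pde_identity_1[OF assms(1)] this
      DERIV_dt_Hh_numerals(2,3)[OF assms]]
  show ?thesis by simp
qed

lemma pde_identity_3:
  assumes y: "y \<in> V"
  shows "iter_dderiv H [pde_curve' y 0, pde_curve' y 0, pde_curve' y 0] (pde_curve y 0)
      + iter_dderiv H [pde_curve'' y 0, pde_curve' y 0] (pde_curve y 0)
      + 2 * iter_dderiv H [pde_curve' y 0, pde_curve'' y 0] (pde_curve y 0)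
      + iter_dderiv H [pde_curve''' y 0] (pde_curve y 0)
      = 4 * dt_Hh 3 y 0"
proof -
  have "((\<lambda>s. iter_dderiv H [pde_curve' y s, pde_curve' y s] (pde_curve y s)
      + iter_dderiv H [pde_curve'' y s] (pde_curve y s)) has_real_derivative
      iter_dderiv H [pde_curve' y 0, pde_curve' y 0, pde_curve' y 0] (pde_curve y 0)
      + iter_dderiv H [pde_curve'' y 0, pde_curve' y 0] (pde_curve y 0)
      + iter_dderiv H [pde_curve' y 0, pde_curve'' y 0] (pde_curve y 0)
      + (iter_dderiv H [pde_curve' y 0, pde_curve'' y 0] (pde_curve y 0)
      + iter_dderiv H [pde_curve''' y 0] (pde_curve y 0))) (at 0)"
    by (intro DERIV_add DERIV_iter_dderiv_compose_directions[OF H_smooth DERIV_pde_curve(1,2,2)[OF y U0], of "[]"]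
        DERIV_iter_dderiv_compose_direction[OF H_smooth DERIV_pde_curve(1,3)[OF y U0], of "[]"])
  from DERIV_unique_cmult_add_ident_mult[OF U_open U0 pde_identity_2[OF y] this
      DERIV_dt_Hh_numerals(3)[OF y U0] DERIV_dt_Hh[OF y U0, of 3]]
  show ?thesis by simp
qed

lemma linear_H_direction: "linear (\<lambda>u. iter_dderiv H (u#vs) x)"
  using linear_iter_dderiv[OF H_smooth open_UNIV UNIV_I, of "[]"] by simp

lemma Jgrad_dt_Hh_0_at_0:
  assumes y: "y \<in> V"
  shows "Jgrad_dt_Hh 0 y 0 = Jgrad_H y"
proof -
  have "iter_dderiv Hh (map (\<lambda>u. (u,0)) [b] @ []) (y,0) = iter_dderiv H [b] y" for b
    by (rule iter_dderiv_Hh_slice[OF smooth_on_subset[OF H_smooth] U0 _ y]) (simp_all add: Hh_at_0)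
  then show ?thesis unfolding Jgrad_dt_Hh_def Jgrad_H_def by simp
qed

lemma iter_dderiv_H_Jgrad_H: "iter_dderiv H [Jgrad_H y] y = 0"
  using sum_Basis_Jinv_skew[OF linear_H_direction linear_H_direction, of "[]" y "[]" y]
  unfolding Jgrad_H_def by simp

lemma dt_Hh_1_at_0:
  assumes y: "y \<in> V"
  shows "dt_Hh 1 y 0 = 0"
proof -
  have "pde_curve y 0 = y" "pde_curve' y 0 = (1/2) *\<^sub>R Jgrad_H y"
    using Jgrad_dt_Hh_0_at_0[OF y] by (simp_all add: pde_curve_def pde_curve'_def)
  then have "2 * dt_Hh 1 y 0 = (1/2) * iter_dderiv H [Jgrad_H y] y"
    using pde_identity_1[OF y U0] iter_dderiv_scaleR[OF H_smooth open_UNIV UNIV_I, where ws="[]"]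
    by simp
  then show ?thesis using iter_dderiv_H_Jgrad_H by simp
qed

lemma Jgrad_dt_Hh_1_at_0:
  assumes y: "y \<in> V"
  shows "Jgrad_dt_Hh 1 y 0 = 0"
proof -
  have "iter_dderiv Hh [(0,1),(b,0)] (y,0) = 0" for b
  proof -
    have "iter_dderiv Hh [(0,1),(b,0)] (y,0) = iter_dderiv Hh [(b,0),(0,1)] (y,0)"
      using iter_dderiv_swap[OF Hh_smooth open_V_times_U, of "(y,0)"] y U0 by simp
    also have "\<dots> = (\<lambda>_. 0) b"
      by (rule iter_dderiv_Hh_slice_Cons[OF U0 y _ has_derivative_const])
        (use dt_Hh_1_at_0 in \<open>simp add: dt_Hh_def\<close>)
    finally show ?thesis by simp
  qed
  then show ?thesis unfolding Jgrad_dt_Hh_def by simp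
qed

lemma dt_Hh_2_at_0:
  assumes y: "y \<in> V"
  shows "dt_Hh 2 y 0 = (1/12) * iter_dderiv H [Jgrad_H y, Jgrad_H y] y"
proof -
  have curve: "pde_curve y 0 = y" "pde_curve' y 0 = (1/2) *\<^sub>R Jgrad_H y" "pde_curve'' y 0 = 0"
    using Jgrad_dt_Hh_0_at_0[OF y] Jgrad_dt_Hh_1_at_0[OF y]
    by (simp_all add: pde_curve_def pde_curve'_def pde_curve''_def)
  have "iter_dderiv H [0] y = 0"
    using iter_dderiv_zero_direction[OF H_smooth open_UNIV UNIV_I, where ws="[]"] by simp
  moreover have "iter_dderiv H [(1/2) *\<^sub>R Jgrad_H y, (1/2) *\<^sub>R Jgrad_H y] y
      = (1/2) * ((1/2) * iter_dderiv H [Jgrad_H y, Jgrad_H y] y)"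
    using iter_dderiv_scaleR[OF H_smooth open_UNIV UNIV_I, where ws="[]"]
      iter_dderiv_scaleR[OF H_smooth open_UNIV UNIV_I, where ws="[Jgrad_H y]"]
    by simp
  ultimately show ?thesis using pde_identity_2[OF y U0] unfolding curve by simp
qed

definition DJgrad_H :: "(real^'n) \<times> (real^'n) \<Rightarrow> (real^'n) \<times> (real^'n) \<Rightarrow> (real^'n) \<times> (real^'n)" where
  "DJgrad_H y d = (\<Sum>b\<in>Basis. iter_dderiv H [d,b] y *\<^sub>R Jinv b)"

definition D_hess_H_Jgrad_H :: "(real^'n) \<times> (real^'n) \<Rightarrow> (real^'n) \<times> (real^'n) \<Rightarrow> real" where
  "D_hess_H_Jgrad_H y d = iter_dderiv H [d, Jgrad_H y, Jgrad_H y] y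
    + iter_dderiv H [DJgrad_H y d, Jgrad_H y] y + iter_dderiv H [Jgrad_H y, DJgrad_H y d] y"

lemma has_derivative_Jgrad_H: "(Jgrad_H has_derivative DJgrad_H y) (at y)"
proof -
  have "((\<lambda>z. \<Sum>b\<in>Basis. iter_dderiv H [b] z *\<^sub>R Jinv b) has_derivative
      (\<lambda>d. \<Sum>b\<in>Basis. iter_dderiv H [d,b] y *\<^sub>R Jinv b)) (at y)"
    by (intro has_derivative_sum has_derivative_scaleR_left smooth_on_has_derivative[OF H_smooth UNIV_I])
  then show ?thesis unfolding Jgrad_H_def[abs_def] DJgrad_H_def[abs_def] .
qed

lemma has_derivative_hess_H_Jgrad_H:
  "((\<lambda>z. iter_dderiv H [Jgrad_H z, Jgrad_H z] z) has_derivative D_hess_H_Jgrad_H y) (at y)"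
  using has_derivative_iter_dderiv_compose_directions[OF H_smooth has_derivative_ident
      has_derivative_Jgrad_H has_derivative_Jgrad_H, of "[]"]
  unfolding D_hess_H_Jgrad_H_def[abs_def] by simp

lemma Jgrad_dt_Hh_2_at_0:
  assumes y: "y \<in> V"
  shows "Jgrad_dt_Hh 2 y 0 = (1/12) *\<^sub>R (\<Sum>b\<in>Basis. D_hess_H_Jgrad_H y b *\<^sub>R Jinv b)"
proof -
  have yU: "(y,0) \<in> V \<times> U" using y U0 by simp
  have dt2: "iter_dderiv Hh [(0,1),(0,1),(b,0)] (y,0) = (1/12) * D_hess_H_Jgrad_H y b" for b
  proof -
    have "iter_dderiv Hh [(0,1),(0,1),(b,0)] (y,0) = iter_dderiv Hh [(0,1),(b,0),(0,1)] (y,0)"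
      using iter_dderiv_swap_Cons[OF Hh_smooth open_V_times_U yU] by simp
    also have "\<dots> = iter_dderiv Hh [(b,0),(0,1),(0,1)] (y,0)"
      using iter_dderiv_swap[OF Hh_smooth open_V_times_U yU] by simp
    also have "\<dots> = (1/12) * D_hess_H_Jgrad_H y b"
    proof (rule iter_dderiv_Hh_slice_Cons[OF U0 y _ has_derivative_mult_right[OF has_derivative_hess_H_Jgrad_H]])
      fix z' assume "z' \<in> V"
      then show "iter_dderiv Hh [(0,1),(0,1)] (z',0) = (1/12) * iter_dderiv H [Jgrad_H z', Jgrad_H z'] z'"
        using dt_Hh_2_at_0[of z'] by (simp add: dt_Hh_def numeral_2_eq_2)
    qed
    finally show ?thesis .
  qed
  show ?thesis unfolding Jgrad_dt_Hh_def scaleR_sum_right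
    by (intro sum.cong refl) (simp add: dt2 numeral_2_eq_2)
qed

lemma dt_Hh_3_at_0:
  assumes y: "y \<in> V"
  shows "dt_Hh 3 y 0 = 0"
proof -
  define v where "v = Jgrad_H y"
  define T where "T = iter_dderiv H [v, v, v] y"
  note scaleR = iter_dderiv_scaleR[OF H_smooth open_UNIV UNIV_I]
  note zero = iter_dderiv_zero_direction[OF H_smooth open_UNIV UNIV_I]
  have curve: "pde_curve y 0 = y" "pde_curve' y 0 = (1/2) *\<^sub>R v" "pde_curve'' y 0 = 0"
    "pde_curve''' y 0 = (3/2) *\<^sub>R Jgrad_dt_Hh 2 y 0"
    using Jgrad_dt_Hh_0_at_0[OF y] Jgrad_dt_Hh_1_at_0[OF y]
    by (simp_all add: pde_curve_def pde_curve'_def pde_curve''_def pde_curve'''_def v_def)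
  have "iter_dderiv H [(1/2) *\<^sub>R v, (1/2) *\<^sub>R v, (1/2) *\<^sub>R v] y = (1/8) * T"
    using scaleR[where ws="[]"] scaleR[where ws="[v]"] scaleR[where ws="[v,v]"] by (simp add: T_def)
  moreover have "iter_dderiv H [0, (1/2) *\<^sub>R v] y = 0" "iter_dderiv H [(1/2) *\<^sub>R v, 0] y = 0"
    using zero[where ws="[]"] zero[where ws="[(1/2) *\<^sub>R v]"] by simp_all
  moreover have "iter_dderiv H [(3/2) *\<^sub>R Jgrad_dt_Hh 2 y 0] y = - (1/8) * T"
  proof -
    have "iter_dderiv H [DJgrad_H y v, v] y = 0"
    proof -
      have "DJgrad_H y v = (\<Sum>b\<in>Basis. iter_dderiv H [b, v] y *\<^sub>R Jinv b)"
        unfolding DJgrad_H_def using iter_dderiv_swap[OF H_smooth open_UNIV UNIV_I, of v _ "[]"] by simp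
      then show ?thesis
        using sum_Basis_Jinv_skew[OF linear_H_direction[of "[v]" y] linear_H_direction[of "[v]" y]] by simp
    qed
    then have "D_hess_H_Jgrad_H y v = T"
      using iter_dderiv_swap[OF H_smooth open_UNIV UNIV_I, of v "DJgrad_H y v" "[]"]
      unfolding D_hess_H_Jgrad_H_def T_def v_def by simp
    then have "iter_dderiv H [Jgrad_dt_Hh 2 y 0] y = - (1/12) * T"
      using sum_Basis_Jinv_skew[OF linear_H_direction[of "[]" y]
          has_derivative_linear[OF has_derivative_hess_H_Jgrad_H[of y]]]
        scaleR[where ws="[]"]
      unfolding Jgrad_dt_Hh_2_at_0[OF y] v_def Jgrad_H_def by simp
    moreover have "iter_dderiv H [(3/2) *\<^sub>R Jgrad_dt_Hh 2 y 0] y = (3/2) * iter_dderiv H [Jgrad_dt_Hh 2 y 0] y"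
      using scaleR[where ws="[]"] by simp
    ultimately show ?thesis by simp
  qed
  ultimately show ?thesis using pde_identity_3[OF y] unfolding curve by simp
qed

definition hess_remainder :: "((real^'n) \<times> (real^'n)) \<times> real \<Rightarrow> real" where
  "hess_remainder p = iter_dderiv Hh [(0,1), (0,1), (Jgrad_H (fst p), 0), (Jgrad_H (fst p), 0)] p"

lemma continuous_on_Jgrad_H: "continuous_on S Jgrad_H"
  unfolding Jgrad_H_def[abs_def]
  by (intro continuous_intros continuous_on_subset[OF smooth_on_continuous_on[OF H_smooth]]) auto

lemma continuous_on_hess_remainder: "continuous_on (V \<times> U) hess_remainder"
proof -
  have "continuous_on (V \<times> U) (\<lambda>p. (Jgrad_H (fst p), 0::real))"
    by (intro continuous_on_Pair continuous_on_const continuous_on_compose2[OF continuous_on_Jgrad_H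
        continuous_on_fst[OF continuous_on_id]]) auto
  from continuous_on_iter_dderiv_directions[OF Hh_smooth open_V_times_U this this, of "[(0,1),(0,1)]"]
  show ?thesis unfolding hess_remainder_def[abs_def] by simp
qed

lemma Hh_expansion:
  assumes y: "y \<in> V" and h: "h \<in> U"
  obtains t where "t \<in> U" "\<bar>t\<bar> \<le> \<bar>h\<bar>"
    "Hh (y,h) = H y + iter_dderiv H [Jgrad_H y, Jgrad_H y] y / 24 * h^2 + dt_Hh 4 y t / 24 * h^4"
proof -
  obtain t where t: "t \<in> U" "\<bar>t\<bar> \<le> \<bar>h\<bar>"
    "dt_Hh 0 y h = (\<Sum>m<4. dt_Hh m y 0 / fact m * h^m) + dt_Hh 4 y t / fact 4 * h^4"
    by (rule Maclaurin_is_interval[where diff="\<lambda>m. dt_Hh m y", OF U_interval U0 h refl DERIV_dt_Hh[OF y]])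
  moreover have "dt_Hh 0 y s = Hh (y,s)" for s by (simp add: dt_Hh_def)
  ultimately show thesis
    using that Hh_at_0[OF y] dt_Hh_1_at_0[OF y] dt_Hh_2_at_0[OF y] dt_Hh_3_at_0[OF y]
    by (simp add: eval_nat_numeral)
qed

lemma hess_expansion:
  assumes y: "y \<in> V" and h: "h \<in> U"
  obtains t where "t \<in> U" "\<bar>t\<bar> \<le> \<bar>h\<bar>"
    "hess_form (\<lambda>z. Hh (z,h)) y (Jinv (grad H y))
      = iter_dderiv H [Jgrad_H y, Jgrad_H y] y + hess_remainder (y,t) / 2 * h^2"
proof -
  define v where "v = Jgrad_H y"
  define dq where "dq m s = iter_dderiv Hh (replicate m (0,1) @ [(v,0),(v,0)]) (y,s)" for m s
  have yU: "(y,0) \<in> V \<times> U" using y U0 by simp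
  have "(dq m has_real_derivative dq (Suc m) s) (at s)" if "s \<in> U" for m s
    unfolding dq_def[abs_def]
    using DERIV_Hh_time[OF y that, of "replicate m (0,1) @ [(v,0),(v,0)]"] by simp
  then obtain t where t: "t \<in> U" "\<bar>t\<bar> \<le> \<bar>h\<bar>"
    "dq 0 h = (\<Sum>m<2. dq m 0 / fact m * h^m) + dq 2 t / fact 2 * h^2"
    by (rule Maclaurin_is_interval[OF U_interval U0 h refl])
  have "dq 0 0 = iter_dderiv H [v, v] y"
    using iter_dderiv_Hh_slice[OF smooth_on_subset[OF H_smooth] U0 _ y, of "[]" "[v,v]"] Hh_at_0
    by (simp add: dq_def)
  moreover have "dq 1 0 = 0"
  proof -
    have "dq 1 0 = iter_dderiv Hh [(v,0),(0,1),(v,0)] (y,0)"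
      using iter_dderiv_swap[OF Hh_smooth open_V_times_U yU, of "(0,1)" "(v,0)"] by (simp add: dq_def)
    also have "\<dots> = iter_dderiv Hh [(v,0),(v,0),(0,1)] (y,0)"
      using iter_dderiv_swap_Cons[OF Hh_smooth open_V_times_U yU] .
    also have "\<dots> = iter_dderiv (\<lambda>_. 0) [v,v] y"
      using iter_dderiv_Hh_slice[OF smooth_on_zero U0 _ y, of "[(0,1)]" "[v,v]"] dt_Hh_1_at_0
      by (simp add: dt_Hh_def)
    finally show ?thesis by (simp add: iter_dderiv_zero_fun)
  qed
  moreover have "dq 2 t = hess_remainder (y,t)"
    by (simp add: dq_def hess_remainder_def v_def numeral_2_eq_2)
  moreover have "hess_form (\<lambda>z. Hh (z,h)) y (Jinv (grad H y)) = dq 0 h"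
    using hess_form_Hh[OF y h] by (simp add: Jinv_grad_H dq_def v_def)
  ultimately show thesis using that t by (simp add: eval_nat_numeral v_def)
qed

lemma midpoint_error_eq:
  assumes y: "y \<in> V" and h: "h \<in> U"
  obtains t1 t2 where "t1 \<in> U" "\<bar>t1\<bar> \<le> \<bar>h\<bar>" "t2 \<in> U" "\<bar>t2\<bar> \<le> \<bar>h\<bar>"
    "H y - (Hh (y, h) - h^2 / 24 * hess_form (\<lambda>z. Hh (z, h)) y (Jinv (grad H y)))
      = h^4 * (hess_remainder (y,t2) / 48 - dt_Hh 4 y t1 / 24)"
proof -
  obtain t1 where t1: "t1 \<in> U" "\<bar>t1\<bar> \<le> \<bar>h\<bar>"
    "Hh (y,h) = H y + iter_dderiv H [Jgrad_H y, Jgrad_H y] y / 24 * h^2 + dt_Hh 4 y t1 / 24 * h^4"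
    using Hh_expansion[OF y h] .
  obtain t2 where t2: "t2 \<in> U" "\<bar>t2\<bar> \<le> \<bar>h\<bar>"
    "hess_form (\<lambda>z. Hh (z,h)) y (Jinv (grad H y))
      = iter_dderiv H [Jgrad_H y, Jgrad_H y] y + hess_remainder (y,t2) / 2 * h^2"
    using hess_expansion[OF y h] .
  show thesis
    by (rule that[OF t1(1,2) t2(1,2)])
      (simp add: t1(3) t2(3) algebra_simps power2_eq_square power4_eq_xxxx)
qed

lemma remainders_bounded:
  assumes K: "compact K" "K \<subseteq> V"
  obtains \<delta> M where "\<delta> > 0"
    "\<And>y t. y \<in> K \<Longrightarrow> \<bar>t\<bar> \<le> \<delta> \<Longrightarrow> \<bar>dt_Hh 4 y t\<bar> \<le> M \<and> \<bar>hess_remainder (y,t)\<bar> \<le> M"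
proof -
  obtain \<delta> where \<delta>: "\<delta> > 0" "cball 0 \<delta> \<subseteq> U"
    using U_open U0 open_contains_cball by blast
  have KT: "compact (K \<times> cball (0::real) \<delta>)" "K \<times> cball (0::real) \<delta> \<subseteq> V \<times> U"
    using K \<delta> by (auto intro!: compact_Times)
  obtain M4 where M4: "\<And>p. p \<in> K \<times> cball (0::real) \<delta> \<Longrightarrow> \<bar>iter_dderiv Hh (replicate 4 (0,1)) p\<bar> \<le> M4"
    using continuous_on_compact_bound[OF KT(1)
        continuous_on_subset[OF smooth_on_continuous_on[OF Hh_smooth] KT(2)]]
    by (metis real_norm_def)
  obtain M2 where M2: "\<And>p. p \<in> K \<times> cball (0::real) \<delta> \<Longrightarrow> \<bar>hess_remainder p\<bar> \<le> M2"
    using continuous_on_compact_bound[OF KT(1) continuous_on_subset[OF continuous_on_hess_remainder KT(2)]]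
    by (metis real_norm_def)
  show thesis
  proof (rule that[OF \<delta>(1), of "max M2 M4"])
    fix y t assume "y \<in> K" "\<bar>t\<bar> \<le> \<delta>"
    then show "\<bar>dt_Hh 4 y t\<bar> \<le> max M2 M4 \<and> \<bar>hess_remainder (y,t)\<bar> \<le> max M2 M4"
      using M2[of "(y,t)"] M4[of "(y,t)"] by (auto simp: dt_Hh_def)
  qed
qed

end

theorem mainTheorem5:
  fixes H :: "((real^'n) \<times> (real^'n)) \<Rightarrow> real"
    and Hh :: "((real^'n) \<times> (real^'n)) \<times> real \<Rightarrow> real"
    and V :: "((real^'n) \<times> (real^'n)) set"
    and U :: "real set"
  assumes H_smooth: "smooth_on UNIV H"
    and V_open: "open V"
    and U_open: "open U" and U_interval: "is_interval U" and U0: "0 \<in> U"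
    and Hh_smooth: "smooth_on (V \<times> U) Hh"
    and PDE: "\<And>y t. y \<in> V \<Longrightarrow> t \<in> U \<Longrightarrow>
       ((\<lambda>s. s * Hh (y, s)) has_real_derivative
          H (y + (t / 2) *\<^sub>R Jinv (grad (\<lambda>z. Hh (z, t)) y))) (at t)"
  shows "\<forall>K. compact K \<and> K \<subseteq> V \<longrightarrow>
     (\<exists>C \<delta>. \<delta> > 0 \<and> (\<forall>y\<in>K. \<forall>h\<in>U. \<bar>h\<bar> < \<delta> \<longrightarrow>
        \<bar>H y - (Hh (y, h) - h^2 / 24 * hess_form (\<lambda>z. Hh (z, h)) y (Jinv (grad H y)))\<bar>
          \<le> C * h^4))"
proof (intro allI impI)
  interpret modified_hamiltonian H Hh V U
    by (rule modified_hamiltonian.intro[OF H_smooth V_open U_open U_interval U0 Hh_smooth PDE])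
  fix K :: "((real^'n) \<times> (real^'n)) set"
  assume K: "compact K \<and> K \<subseteq> V"
  obtain \<delta> M where \<delta>: "\<delta> > 0"
    and M: "\<And>y t. y \<in> K \<Longrightarrow> \<bar>t\<bar> \<le> \<delta> \<Longrightarrow> \<bar>dt_Hh 4 y t\<bar> \<le> M \<and> \<bar>hess_remainder (y,t)\<bar> \<le> M"
    by (rule remainders_bounded[of K]) (use K in auto)
  show "\<exists>C \<delta>. \<delta> > 0 \<and> (\<forall>y\<in>K. \<forall>h\<in>U. \<bar>h\<bar> < \<delta> \<longrightarrow>
        \<bar>H y - (Hh (y, h) - h^2 / 24 * hess_form (\<lambda>z. Hh (z, h)) y (Jinv (grad H y)))\<bar>
          \<le> C * h^4)"
  proof (intro exI conjI ballI impI)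
    fix y h assume y: "y \<in> K" and h: "h \<in> U" "\<bar>h\<bar> < \<delta>"
    obtain t1 t2 where t: "\<bar>t1\<bar> \<le> \<bar>h\<bar>" "\<bar>t2\<bar> \<le> \<bar>h\<bar>"
      and err: "H y - (Hh (y, h) - h^2 / 24 * hess_form (\<lambda>z. Hh (z, h)) y (Jinv (grad H y)))
        = h^4 * (hess_remainder (y,t2) / 48 - dt_Hh 4 y t1 / 24)"
      by (rule midpoint_error_eq[of y h]) (use y K h in auto)
    have "\<bar>dt_Hh 4 y t1\<bar> \<le> M" "\<bar>hess_remainder (y,t2)\<bar> \<le> M"
      using M[OF y, of t1] M[OF y, of t2] t h by auto
    then have "\<bar>hess_remainder (y,t2) / 48 - dt_Hh 4 y t1 / 24\<bar> \<le> M / 16"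
      using abs_triangle_ineq4[of "hess_remainder (y,t2) / 48" "dt_Hh 4 y t1 / 24"] by simp
    from mult_left_mono[OF this, of "h^4"]
    show "\<bar>H y - (Hh (y, h) - h^2 / 24 * hess_form (\<lambda>z. Hh (z, h)) y (Jinv (grad H y)))\<bar>
        \<le> M / 16 * h^4"
      unfolding err by (simp add: abs_mult mult.commute)
  qed (fact \<delta>)
qed

end
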